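(* If $\mathcal{K}$ and $\mathcal{J}$ are elements of infinite order in $\mathcal{C}$ and $\Delta([\mathcal{K}],[\mathcal{J}])=0$, then there exist $a,b\in\mathbb{Z}$ such that $a\mathcal{K}=b\mathcal{J}\neq0$.
   Context: $\mathcal{C}$ is the smooth knot concordance group (knots in $S^3$ modulo smooth concordance, operation connected sum, inverse $-\mathcal{K}$ the reverse mirror image). $d(\mathcal{K},\mathcal{J})=g_4(\mathcal{K}\,\#\,-\mathcal{J})$, $g_4$ the smooth four-genus. Let $\mathcal{C}^\circ=\mathcal{C}\setminus\{0\}$; $\mathcal{K}\sim'\mathcal{J}$ if there exist $\mathcal{M}\in\mathcal{C}$ and $r,s\in\mathbb{Z}$ with $\mathcal{K}=r\mathcal{M}$, $\mathcal{J}=s\mathcal{M}$; $\sim$ is the equivalence relation generated by $\sim'$; $\mathbb{P}(\mathcal{C})=\mathcal{C}^\circ/\sim$ with classes $[\mathcal{K}]$. Define $\delta([\mathcal{K}],[\mathcal{J}])=\min\{d(\mathcal{K}',\mathcal{J}'):\mathcal{K}'\in[\mathcal{K}],\mathcal{J}'\in[\mathcal{J}]\}$ and $\Delta([\mathcal{K}],[\mathcal{J}])=\min\sum_{i=0}^{n-1}\delta([\mathcal{K}_i],[\mathcal{K}_{i+1}])$ over all finite sequences of classes with $[\mathcal{K}_0]=[\mathcal{K}]$, $[\mathcal{K}_n]=[\mathcal{J}]$. *)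

theory Defs
  imports "HOL-Algebra.Multiplicative_Group"
begin

text \<open>The concordance group is modelled abstractly as a commutative group G
(written multiplicatively: unit = 0, product = connected sum, inverse = reverse mirror)
together with the smooth four-genus g4 :: 'a => nat.\<close>

definition cdist :: "('a, 'b) monoid_scheme \<Rightarrow> ('a \<Rightarrow> nat) \<Rightarrow> 'a \<Rightarrow> 'a \<Rightarrow> nat" where
  "cdist G g4 K J = g4 (K \<otimes>\<^bsub>G\<^esub> inv\<^bsub>G\<^esub> J)"

definition nonzero :: "('a, 'b) monoid_scheme \<Rightarrow> 'a set" where
  "nonzero G = carrier G - {\<one>\<^bsub>G\<^esub>}"

definition sim1 :: "('a, 'b) monoid_scheme \<Rightarrow> 'a \<Rightarrow> 'a \<Rightarrow> bool" where
  "sim1 G K J \<longleftrightarrow> (\<exists>M\<in>carrier G. \<exists>(r::int) (s::int). K = M [^]\<^bsub>G\<^esub> r \<and> J = M [^]\<^bsub>G\<^esub> s)"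

definition simrel :: "('a, 'b) monoid_scheme \<Rightarrow> 'a \<Rightarrow> 'a \<Rightarrow> bool" where
  "simrel G = (\<lambda>K J. K \<in> nonzero G \<and> J \<in> nonzero G \<and>
      (equivclp (\<lambda>x y. x \<in> nonzero G \<and> y \<in> nonzero G \<and> sim1 G x y)) K J)"

definition pclass :: "('a, 'b) monoid_scheme \<Rightarrow> 'a \<Rightarrow> 'a set" where
  "pclass G K = {J. simrel G K J}"

definition proj_classes :: "('a, 'b) monoid_scheme \<Rightarrow> 'a set set" where
  "proj_classes G = pclass G ` nonzero G"

definition pdelta :: "('a, 'b) monoid_scheme \<Rightarrow> ('a \<Rightarrow> nat) \<Rightarrow> 'a set \<Rightarrow> 'a set \<Rightarrow> nat" where
  "pdelta G g4 A B = Inf {cdist G g4 K' J' | K' J'. K' \<in> A \<and> J' \<in> B}"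

definition pDelta :: "('a, 'b) monoid_scheme \<Rightarrow> ('a \<Rightarrow> nat) \<Rightarrow> 'a set \<Rightarrow> 'a set \<Rightarrow> nat" where
  "pDelta G g4 A B = Inf {(\<Sum>i < length xs - 1. pdelta G g4 (xs ! i) (xs ! Suc i)) | xs.
      xs \<noteq> [] \<and> hd xs = A \<and> last xs = B \<and> set xs \<subseteq> proj_classes G}"

end

theory Submission
  imports Defs
begin

text \<open>If \<open>\<Delta>([K],[J]) = 0\<close>, a minimising chain of classes has all its \<open>\<delta>\<close>-steps zero. Since the
four-genus vanishes only on the trivial knot, a zero step means the two classes share an
element, so \<open>[K] = [J]\<close>: \<open>K\<close> and \<open>J\<close> are joined by a chain of nonzero elements, consecutive ones
being multiples of a common \<open>M\<close>. Along such a chain infinite order propagates (if \<open>rM\<close> has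
infinite order, so has \<open>M\<close>, hence so does every nonzero \<open>sM\<close>), and so does commensurability
with \<open>K\<close>: from \<open>aK = bY\<close> and \<open>Y = rM\<close>, \<open>Z = sM\<close> one gets \<open>asK = rbZ\<close>. As \<open>K\<close> has infinite
order and \<open>a \<noteq> 0\<close>, the common multiple \<open>aK = bJ\<close> is nonzero.\<close>

lemma successively_eq_hd_eq_last:
  assumes "successively (=) xs" and "xs \<noteq> []"
  shows "hd xs = last xs"
  using assms by (induction xs rule: induct_list012) auto

lemma (in group) ord_eq_0_iff_int_pow:
  assumes "x \<in> carrier G"
  shows "ord x = 0 \<longleftrightarrow> (\<forall>i::int. x [^] i = \<one> \<longrightarrow> i = 0)"
  using assms int_pow_eq_id[OF assms] by (metis dvd_0_left_iff dvd_refl of_nat_eq_0_iff)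

lemma (in group) ord_int_pow_eq_0_iff:
  assumes "x \<in> carrier G"
  shows "ord (x [^] (r::int)) = 0 \<longleftrightarrow> ord x = 0 \<and> r \<noteq> 0"
proof
  assume "ord (x [^] r) = 0"
  then have no_torsion: "\<And>i. x [^] (r * i) = \<one> \<Longrightarrow> i = 0"
    using assms by (simp add: ord_eq_0_iff_int_pow int_pow_pow)
  show "ord x = 0 \<and> r \<noteq> 0"
    using no_torsion[of 1] no_torsion[of "int (ord x)"] assms by (auto simp: int_pow_eq_id)
next
  assume "ord x = 0 \<and> r \<noteq> 0"
  then show "ord (x [^] r) = 0"
    using assms by (auto simp: ord_eq_0_iff_int_pow int_pow_pow)
qed

lemma sim1_sym: "sim1 G x y \<Longrightarrow> sim1 G y x"
  unfolding sim1_def by blast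

lemma (in group) sim1_ord_eq_0:
  assumes "sim1 G y z" and "ord y = 0" and "z \<noteq> \<one>"
  shows "ord z = 0 \<and> (\<exists>(s::int) (r::int). s \<noteq> 0 \<and> y [^] s = z [^] r)"
proof -
  obtain M r s where M: "M \<in> carrier G" and y: "y = M [^] (r::int)" and z: "z = M [^] (s::int)"
    using assms(1) unfolding sim1_def by blast
  have "ord M = 0" and "r \<noteq> 0" using assms(2) M y by (simp_all add: ord_int_pow_eq_0_iff)
  moreover have "s \<noteq> 0" using assms(3) z by auto
  moreover have "y [^] s = z [^] r" using M y z by (simp add: int_pow_pow mult.commute)
  ultimately show ?thesis using M z by (auto simp: ord_int_pow_eq_0_iff)
qed

lemma (in group) int_pow_commensurable_trans:
  assumes "x \<in> carrier G" "y \<in> carrier G" "z \<in> carrier G"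
    and "x [^] (a::int) = y [^] (b::int)" and "y [^] (s::int) = z [^] (r::int)"
  shows "x [^] (a * s) = z [^] (r * b)"
proof -
  have "x [^] (a * s) = (y [^] b) [^] s" using assms(1,4) by (metis int_pow_pow)
  also have "\<dots> = (y [^] s) [^] b" using assms(2) by (simp add: int_pow_pow mult.commute)
  also have "\<dots> = z [^] (r * b)" using assms(3,5) by (simp add: int_pow_pow)
  finally show ?thesis .
qed

lemma (in group) equivclp_sim1_commensurable:
  assumes "equivclp (\<lambda>x y. x \<in> nonzero G \<and> y \<in> nonzero G \<and> sim1 G x y) K J"
    and "K \<in> carrier G" and "ord K = 0"
  shows "J \<in> carrier G \<and> ord J = 0 \<and> (\<exists>(a::int) (b::int). a \<noteq> 0 \<and> K [^] a = J [^] b)"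
  using assms(1)
proof (induction rule: equivclp_induct)
  case base
  then show ?case using assms(2,3) by (intro conjI exI[of _ 1]) auto
next
  case (step y z)
  then obtain a b where a: "a \<noteq> 0" and Ky: "K [^] (a::int) = y [^] (b::int)"
    and y: "y \<in> carrier G" "ord y = 0"
    by blast
  have z: "z \<in> carrier G" "z \<noteq> \<one>" and "sim1 G y z"
    using step.hyps(2) by (auto simp: nonzero_def intro: sim1_sym)
  then obtain s r where s: "s \<noteq> 0" and yz: "y [^] (s::int) = z [^] (r::int)" and "ord z = 0"
    using sim1_ord_eq_0 y(2) by blast
  moreover have "K [^] (a * s) = z [^] (r * b)"
    using int_pow_commensurable_trans[OF assms(2) y(1) z(1) Ky yz] .
  moreover have "a * s \<noteq> 0" using a s by simp
  ultimately show ?case using z(1) by blast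
qed

lemma mem_pclass_self: "x \<in> nonzero G \<Longrightarrow> x \<in> pclass G x"
  by (simp add: pclass_def simrel_def)

lemma proj_classes_subset_nonzero: "A \<in> proj_classes G \<Longrightarrow> A \<subseteq> nonzero G"
  by (auto simp: proj_classes_def pclass_def simrel_def)

lemma pclass_eq_if_mem:
  assumes "y \<in> pclass G x"
  shows "pclass G y = pclass G x"
proof -
  let ?R = "\<lambda>x y. x \<in> nonzero G \<and> y \<in> nonzero G \<and> sim1 G x y"
  have "x \<in> nonzero G" "y \<in> nonzero G" and xy: "equivclp ?R x y"
    using assms by (simp_all add: pclass_def simrel_def)
  moreover have "equivclp ?R y J \<longleftrightarrow> equivclp ?R x J" for J
    using xy by (meson equivclp_trans equivclp_sym)
  ultimately have "simrel G y J \<longleftrightarrow> simrel G x J" for J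
    unfolding simrel_def by blast
  then show ?thesis unfolding pclass_def by blast
qed

lemma proj_classes_eq_if_mem:
  assumes "A \<in> proj_classes G" "B \<in> proj_classes G" "x \<in> A" "x \<in> B"
  shows "A = B"
proof -
  obtain a b where A: "A = pclass G a" and B: "B = pclass G b"
    using assms(1,2) unfolding proj_classes_def by blast
  have "pclass G x = A" using assms(3) unfolding A by (rule pclass_eq_if_mem)
  moreover have "pclass G x = B" using assms(4) unfolding B by (rule pclass_eq_if_mem)
  ultimately show ?thesis by simp
qed

lemma proj_classes_nonempty:
  assumes "A \<in> proj_classes G"
  shows "A \<noteq> {}"
proof -
  obtain x where "x \<in> nonzero G" "A = pclass G x"
    using assms unfolding proj_classes_def by blast
  then have "x \<in> A" by (simp add: mem_pclass_self)
  then show ?thesis by auto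
qed

lemma (in group) r_inv_eq_one_iff:
  assumes "x \<in> carrier G" "y \<in> carrier G"
  shows "x \<otimes> inv y = \<one> \<longleftrightarrow> x = y"
proof
  assume "x \<otimes> inv y = \<one>"
  then have "inv (inv y) = x" using assms by (intro inv_equality) auto
  then show "x = y" using assms by simp
qed (simp add: assms)

lemma (in group) cdist_eq_0_iff:
  assumes "\<forall>x\<in>carrier G. g4 x = 0 \<longleftrightarrow> x = \<one>" and "K \<in> carrier G" "J \<in> carrier G"
  shows "cdist G g4 K J = 0 \<longleftrightarrow> K = J"
  using assms by (simp add: cdist_def r_inv_eq_one_iff)

lemma (in group) pdelta_eq_0_imp_eq:
  assumes "\<forall>x\<in>carrier G. g4 x = 0 \<longleftrightarrow> x = \<one>"
    and A: "A \<in> proj_classes G" and B: "B \<in> proj_classes G" and "pdelta G g4 A B = 0"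
  shows "A = B"
proof -
  let ?S = "{cdist G g4 K' J' | K' J'. K' \<in> A \<and> J' \<in> B}"
  have "?S \<noteq> {}" using proj_classes_nonempty[OF A] proj_classes_nonempty[OF B] by blast
  then have "Inf ?S \<in> ?S" by (rule Inf_nat_def1)
  then have "0 \<in> ?S" using assms(4) unfolding pdelta_def by simp
  then obtain K' J' where "K' \<in> A" "J' \<in> B" "cdist G g4 K' J' = 0" by auto
  moreover have "A \<subseteq> carrier G" "B \<subseteq> carrier G"
    using proj_classes_subset_nonzero[OF A] proj_classes_subset_nonzero[OF B]
    by (auto simp: nonzero_def)
  ultimately have "K' = J'" "K' \<in> A" "K' \<in> B" using cdist_eq_0_iff[OF assms(1)] by auto
  then show ?thesis using proj_classes_eq_if_mem[OF A B] by blast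
qed

lemma (in group) pDelta_eq_0_imp_eq:
  assumes "\<forall>x\<in>carrier G. g4 x = 0 \<longleftrightarrow> x = \<one>"
    and A: "A \<in> proj_classes G" and B: "B \<in> proj_classes G" and "pDelta G g4 A B = 0"
  shows "A = B"
proof -
  let ?S = "{(\<Sum>i < length xs - 1. pdelta G g4 (xs ! i) (xs ! Suc i)) | xs.
      xs \<noteq> [] \<and> hd xs = A \<and> last xs = B \<and> set xs \<subseteq> proj_classes G}"
  have "[A, B] \<in> {xs. xs \<noteq> [] \<and> hd xs = A \<and> last xs = B \<and> set xs \<subseteq> proj_classes G}"
    using A B by simp
  then have "?S \<noteq> {}" by blast
  then have "Inf ?S \<in> ?S" by (rule Inf_nat_def1)
  then have "0 \<in> ?S" using assms(4) unfolding pDelta_def by simp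
  then obtain xs where xs: "xs \<noteq> []" "hd xs = A" "last xs = B" "set xs \<subseteq> proj_classes G"
    and sum: "(\<Sum>i < length xs - 1. pdelta G g4 (xs ! i) (xs ! Suc i)) = 0"
    by auto
  have "xs ! i = xs ! Suc i" if "Suc i < length xs" for i
  proof (rule pdelta_eq_0_imp_eq[OF assms(1)])
    show "xs ! i \<in> proj_classes G" "xs ! Suc i \<in> proj_classes G"
      using that xs(4) nth_mem[of i xs] nth_mem[of "Suc i" xs] by auto
    show "pdelta G g4 (xs ! i) (xs ! Suc i) = 0" using sum that by simp
  qed
  then have "successively (=) xs" by (simp add: successively_conv_nth)
  then show ?thesis using successively_eq_hd_eq_last[OF _ xs(1)] xs(2,3) by simp
qed

theorem theorem6p2:
  fixes G :: "('a, 'b) monoid_scheme" and g4 :: "'a \<Rightarrow> nat" and K J :: 'a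
  assumes "comm_group G"
    and "\<forall>x\<in>carrier G. g4 x = 0 \<longleftrightarrow> x = \<one>\<^bsub>G\<^esub>"
    and "K \<in> carrier G" and "J \<in> carrier G"
    and "group.ord G K = 0" and "group.ord G J = 0"
    and "pDelta G g4 (pclass G K) (pclass G J) = 0"
  shows "\<exists>(a::int) (b::int). K [^]\<^bsub>G\<^esub> a = J [^]\<^bsub>G\<^esub> b \<and> K [^]\<^bsub>G\<^esub> a \<noteq> \<one>\<^bsub>G\<^esub>"
proof -
  interpret comm_group G by (rule assms(1))
  have "K \<in> nonzero G" and J: "J \<in> nonzero G"
    using assms(3-6) by (auto simp: nonzero_def)
  then have "pclass G K = pclass G J"
    using pDelta_eq_0_imp_eq[OF assms(2) _ _ assms(7)] by (simp add: proj_classes_def)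
  then have "J \<in> pclass G K" using mem_pclass_self[OF J] by simp
  then have "equivclp (\<lambda>x y. x \<in> nonzero G \<and> y \<in> nonzero G \<and> sim1 G x y) K J"
    by (simp add: pclass_def simrel_def)
  then obtain a b where "a \<noteq> 0" and "K [^]\<^bsub>G\<^esub> (a::int) = J [^]\<^bsub>G\<^esub> (b::int)"
    using equivclp_sim1_commensurable assms(3,5) by blast
  moreover have "K [^]\<^bsub>G\<^esub> a \<noteq> \<one>\<^bsub>G\<^esub>" using \<open>a \<noteq> 0\<close> assms(3,5) by (simp add: int_pow_eq_id)
  ultimately show ?thesis by blast
qed

end
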